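(* Suppose $A$ is indecomposable. Let $K\subsetneq I$ be such that the subgroup $W_K=\langle r_i:i\in K\rangle$ of $W^v$ is infinite, and let $u\in\mathbb A$ satisfy $\alpha_i(u)=0$ for $i\in K$ and $\alpha_i(u)>0$ for $i\in I\setminus K$. Then there exists $w\in W^v$ such that the orbit $W_K\cdot w(u)$ is infinite (equivalently, the set of vectorial faces $W_K\cdot w\cdot F^v$ is infinite, where $F^v=\{v:\alpha_i(v)=0\ (i\in K),\ \alpha_i(v)>0\ (i\notin K)\}$ is the vectorial face containing $u$, whose fixer in $W^v$ is $W_K$).
   Context: $I$ finite, $A=(a_{i,j})_{i,j\in I}$ a generalized Cartan matrix ($a_{i,i}=2$, $a_{i,j}\in\mathbb Z_{\le0}$ for $i\ne j$, $a_{i,j}=0\iff a_{j,i}=0$); $A$ is indecomposable if the graph on $I$ with edges $\{i,j\}$ for $a_{i,j}\neq0$ is connected. $\mathbb A$ is a finite-dimensional real vector space with linearly independent families $(\alpha_i)_{i\in I}\subset\mathbb A^*$, $(\alpha_i^\vee)_{i\in I}\subset\mathbb A$ with $\alpha_j(\alpha_i^\vee)=a_{i,j}$; $r_i(v)=v-\alpha_i(v)\alpha_i^\vee$; $W^v=\langle r_i:i\in I\rangle$. *)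

theory Defs
  imports "HOL-Analysis.Analysis"
begin

definition gcm :: "('i \<Rightarrow> 'i \<Rightarrow> int) \<Rightarrow> bool" where
  "gcm a \<longleftrightarrow> (\<forall>i. a i i = 2) \<and> (\<forall>i j. i \<noteq> j \<longrightarrow> a i j \<le> 0)
     \<and> (\<forall>i j. a i j = 0 \<longleftrightarrow> a j i = 0)"

definition indecomposable :: "('i \<Rightarrow> 'i \<Rightarrow> int) \<Rightarrow> bool" where
  "indecomposable a \<longleftrightarrow> (\<forall>i j. (i, j) \<in> {(k, l). a k l \<noteq> 0}\<^sup>*)"

definition lin_indep_forms :: "('i::finite \<Rightarrow> 'v::real_vector \<Rightarrow> real) \<Rightarrow> bool" where
  "lin_indep_forms \<alpha> \<longleftrightarrow>
     (\<forall>c. (\<forall>v. (\<Sum>i\<in>UNIV. c i * \<alpha> i v) = 0) \<longrightarrow> (\<forall>i. c i = 0))"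

definition lin_indep_vecs :: "('i::finite \<Rightarrow> 'v::real_vector) \<Rightarrow> bool" where
  "lin_indep_vecs x \<longleftrightarrow> (\<forall>c. (\<Sum>i\<in>UNIV. c i *\<^sub>R x i) = 0 \<longrightarrow> (\<forall>i. c i = 0))"

definition refl :: "('i \<Rightarrow> 'v::real_vector \<Rightarrow> real) \<Rightarrow> ('i \<Rightarrow> 'v) \<Rightarrow> 'i \<Rightarrow> 'v \<Rightarrow> 'v" where
  "refl \<alpha> \<alpha>v i v = v - \<alpha> i v *\<^sub>R \<alpha>v i"

text \<open>Subgroup W_K of the linear automorphism group generated by the r_i, i in K.
  Since each r_i is an involution, the monoid generated by them under composition
  is the generated group.\<close>
inductive_set Wgen :: "('i \<Rightarrow> 'v::real_vector \<Rightarrow> real) \<Rightarrow> ('i \<Rightarrow> 'v) \<Rightarrow> 'i set \<Rightarrow> ('v \<Rightarrow> 'v) set"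
  for \<alpha> \<alpha>v K where
  Wgen_id: "id \<in> Wgen \<alpha> \<alpha>v K"
| Wgen_step: "i \<in> K \<Longrightarrow> w \<in> Wgen \<alpha> \<alpha>v K \<Longrightarrow> refl \<alpha> \<alpha>v i \<circ> w \<in> Wgen \<alpha> \<alpha>v K"

end

theory Submission
  imports Defs
begin

text \<open>
  If all orbits W_K w(u) were finite, they would stay finite on the span V of the W-orbit of u,
  by linearity. V is W-stable and contains u with \<alpha>_i(u) > 0 for some i \<notin> K; since
  u - r_i u is a nonzero multiple of \<alpha>_i^\<vee>, and \<alpha>_k^\<vee> - r_l \<alpha>_k^\<vee> = a_kl \<alpha>_l^\<vee>, indecomposability
  puts every coroot into V. So W_K has finite orbits on the coroots. But W acts faithfully on
  them: if \<ell>(w r_i) \<ge> \<ell>(w), then w(\<alpha>_i^\<vee>) is a nonnegative combination of coroots (Kac,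
  Lemma 3.11, proved by reduction to the dihedral subgroups), so a nontrivial w, ending in r_s
  in a reduced expression, sends \<alpha>_s^\<vee> to a nonpositive vector. Hence W_K would be finite.
\<close>

lemma span_closed_under_linear:
  assumes "linear f" "f ` T \<subseteq> T" "x \<in> span T"
  shows "f x \<in> span T"
proof -
  have "f x \<in> span (f ` T)" using assms(1,3) by (simp add: span_linear_image)
  then show ?thesis using span_mono[OF assms(2)] by blast
qed

lemma finite_orbits_span:
  assumes lin: "\<And>g. g \<in> G \<Longrightarrow> linear g"
    and fin: "\<And>x. x \<in> T \<Longrightarrow> finite ((\<lambda>g. g x) ` G)"
    and "x \<in> span T"
  shows "finite ((\<lambda>g. g x) ` G)"
  using \<open>x \<in> span T\<close>
proof (induction rule: span_induct_alt)
  case base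
  have "(\<lambda>g. g 0) ` G \<subseteq> {0}" using lin by (auto simp: linear_0)
  then show ?case by (rule finite_subset) simp
next
  case (step c x y)
  have "(\<lambda>g. g (c *\<^sub>R x + y)) ` G
      \<subseteq> (\<lambda>(p, q). c *\<^sub>R p + q) ` ((\<lambda>g. g x) ` G \<times> (\<lambda>g. g y) ` G)"
    using lin by (force simp: linear_add linear_scale)
  moreover have "finite ((\<lambda>g. g x) ` G \<times> (\<lambda>g. g y) ` G)"
    using fin[OF step.hyps(1)] step.IH by simp
  ultimately show ?case by (meson finite_imageI finite_subset)
qed

section \<open>Alternating words and their coefficients\<close>

text \<open>The last letter of alt s t n is t, so r_t is the reflection applied first.\<close>
fun alt :: "'i \<Rightarrow> 'i \<Rightarrow> nat \<Rightarrow> 'i list" where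
  "alt s t 0 = []"
| "alt s t (Suc n) = (if odd n then s else t) # alt s t n"

lemma length_alt [simp]: "length (alt s t n) = n"
  by (induction n) auto

lemma set_alt_subset: "set (alt s t n) \<subseteq> {s, t}"
  by (induction n) auto

lemma alt_Suc_snoc: "alt t s (Suc n) = alt s t n @ [s]"
  by (induction n) auto

lemma alt_drop: "drop n (alt s t (n + m)) = alt s t m"
  by (induction n) auto

text \<open>
  wprod (alt s t n) v = v + c \<alpha>_s^\<vee> + d \<alpha>_t^\<vee> for (c, d) = alt_coeffs X Y P Q n, where
  X = -a_st, Y = -a_ts, P = \<alpha>_s(v), Q = \<alpha>_t(v); see wprod_alt.
\<close>
fun alt_coeffs :: "real \<Rightarrow> real \<Rightarrow> real \<Rightarrow> real \<Rightarrow> nat \<Rightarrow> real \<times> real" where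
  "alt_coeffs X Y P Q 0 = (0, 0)"
| "alt_coeffs X Y P Q (Suc n) = (case alt_coeffs X Y P Q n of (c, d) \<Rightarrow>
     if odd n then (Y * d - c - P, d) else (c, X * c - d - Q))"

lemma alt_coeffs_numeral:
  "alt_coeffs X Y P Q (numeral k) = (case alt_coeffs X Y P Q (pred_numeral k) of (c, d) \<Rightarrow>
     if odd (pred_numeral k) then (Y * d - c - P, d) else (c, X * c - d - Q))"
  by (simp add: numeral_eq_Suc)

text \<open>The case v = \<alpha>_s^\<vee>, so P = 2, Q = -X, and the leading 1 is the coefficient of v itself.\<close>
lemma alt_coeffs_coroot_nonneg:
  fixes X Y :: real
  assumes "0 \<le> X" "0 \<le> Y" "4 \<le> X * Y"
  shows "0 \<le> 1 + fst (alt_coeffs X Y 2 (- X) n) \<and> 0 \<le> snd (alt_coeffs X Y 2 (- X) n)"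
proof -
  have "0 \<le> c \<and> 0 \<le> d \<and> (if odd n then 2 * c \<le> Y * d else 2 * d \<le> X * c)"
    if "alt_coeffs X Y 2 (- X) n = (c - 1, d)" for c d
    using that
  proof (induction n arbitrary: c d)
    case 0
    then show ?case using assms by simp
  next
    case (Suc n)
    obtain c' d' where prev: "alt_coeffs X Y 2 (- X) n = (c' - 1, d')"
      by (metis add_diff_cancel_right' prod.collapse)
    note IH = Suc.IH[OF prev]
    show ?case
    proof (cases "odd n")
      case True
      with Suc.prems prev have cd: "c = Y * d' - c'" "d = d'" by auto
      have "X * (2 * c') \<le> X * (Y * d')" using IH True assms(1) by (simp add: mult_left_mono)
      moreover have "4 * d' \<le> X * Y * d'" using IH assms(3) by (simp add: mult_right_mono)
      ultimately show ?thesis using True IH cd by (simp add: right_diff_distrib)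
    next
      case False
      with Suc.prems prev have cd: "c = c'" "d = X * c' - d'" by (auto simp: algebra_simps)
      have "Y * (2 * d') \<le> Y * (X * c')" using IH False assms(2) by (simp add: mult_left_mono)
      moreover have "4 * c' \<le> Y * (X * c')" using IH mult_right_mono[OF assms(3), of c'] by (simp add: ac_simps)
      ultimately show ?thesis using False IH cd by (simp add: right_diff_distrib)
    qed
  qed
  then show ?thesis by (metis add_diff_cancel_left' prod.collapse)
qed

text \<open>The rank-two Cartan matrices of finite type: A_1 \<times> A_1, A_2, B_2 and G_2.\<close>
lemma int_pairs_mult_lt_4:
  fixes X Y :: int
  assumes "0 \<le> X" "0 \<le> Y" "X = 0 \<longleftrightarrow> Y = 0" "X * Y < 4"
  shows "(X = 0 \<and> Y = 0) \<or> (X = 1 \<and> Y = 1) \<or> (X = 1 \<and> Y = 2) \<or> (X = 2 \<and> Y = 1)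
    \<or> (X = 1 \<and> Y = 3) \<or> (X = 3 \<and> Y = 1)"
proof (cases "X = 0")
  case False
  with assms have "1 \<le> X" "1 \<le> Y" by auto
  then have "X \<le> X * Y" "Y \<le> X * Y" by (simp_all add: mult_le_cancel_left1 mult_le_cancel_right1)
  with assms(4) have "X \<le> 3" "Y \<le> 3" by linarith+
  with \<open>1 \<le> X\<close> \<open>1 \<le> Y\<close> have "X \<in> {1, 2, 3}" "Y \<in> {1, 2, 3}" by auto
  with assms(4) show ?thesis by auto
qed (use assms in simp)

section \<open>Words in the simple reflections\<close>

locale gcm_realization =
  fixes a :: "'i::finite \<Rightarrow> 'i \<Rightarrow> int"
    and \<alpha> :: "'i \<Rightarrow> 'v::euclidean_space \<Rightarrow> real"
    and \<alpha>v :: "'i \<Rightarrow> 'v"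
  assumes gcm: "gcm a"
    and linear_\<alpha>: "\<And>i. linear (\<alpha> i)"
    and indep_\<alpha>v: "lin_indep_vecs \<alpha>v"
    and \<alpha>_\<alpha>v: "\<And>i j. \<alpha> j (\<alpha>v i) = of_int (a i j)"
begin

abbreviation r :: "'i \<Rightarrow> 'v \<Rightarrow> 'v" where
  "r \<equiv> refl \<alpha> \<alpha>v"

abbreviation bond :: "'i \<Rightarrow> 'i \<Rightarrow> real" where
  "bond s t \<equiv> - of_int (a s t)"

lemma gcm_diag: "a i i = 2"
  using gcm unfolding gcm_def by auto

lemma r_apply: "r i x = x - \<alpha> i x *\<^sub>R \<alpha>v i"
  by (simp add: refl_def)

lemma linear_r: "linear (r i)"
  using linear_\<alpha>[of i] by (intro linearI) (simp_all add: r_apply linear_add linear_scale algebra_simps)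

lemma r_r [simp]: "r i (r i x) = x"
  using linear_\<alpha>[of i] by (simp add: r_apply linear_diff linear_scale \<alpha>_\<alpha>v gcm_diag)

lemma r_comp_r [simp]: "r i \<circ> r i = id"
  by (rule ext) simp

lemma r_\<alpha>v_self: "r i (\<alpha>v i) = - \<alpha>v i"
  by (simp add: r_apply \<alpha>_\<alpha>v gcm_diag scaleR_2 algebra_simps)

primrec wprod :: "'i list \<Rightarrow> 'v \<Rightarrow> 'v" where
  "wprod [] = id"
| "wprod (i # is) = r i \<circ> wprod is"

lemma wprod_append: "wprod (xs @ ys) = wprod xs \<circ> wprod ys"
  by (induction xs) (auto simp: o_assoc)

lemma wprod_snoc: "wprod (xs @ [i]) = wprod xs \<circ> r i"
  by (simp add: wprod_append)

lemma linear_wprod: "linear (wprod xs)"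
proof (induction xs)
  case (Cons i xs)
  then show ?case using linear_compose[OF Cons linear_r] by (simp add: o_def)
qed (simp add: id_def linear_ident)

lemma wprod_rev_wprod [simp]: "wprod (rev xs) (wprod xs v) = v"
  by (induction xs arbitrary: v) (auto simp: wprod_append)

lemma Wgen_eq_wprod: "Wgen \<alpha> \<alpha>v K = {wprod ws | ws. set ws \<subseteq> K}"
proof (intro equalityI subsetI)
  fix f assume "f \<in> Wgen \<alpha> \<alpha>v K"
  then show "f \<in> {wprod ws | ws. set ws \<subseteq> K}"
  proof induction
    case Wgen_id
    show ?case by (auto intro!: exI[of _ "[]"])
  next
    case (Wgen_step i w)
    then obtain ws where "set ws \<subseteq> K" "w = wprod ws" by auto
    with Wgen_step show ?case by (auto intro!: exI[of _ "i # ws"])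
  qed
next
  fix f assume "f \<in> {wprod ws | ws. set ws \<subseteq> K}"
  then obtain ws where "set ws \<subseteq> K" "f = wprod ws" by auto
  then show "f \<in> Wgen \<alpha> \<alpha>v K"
    by (induction ws arbitrary: f) (auto intro: Wgen.intros)
qed

text \<open>If f is not a product of reflections r_i with i \<in> S, the LEAST is over an empty set and
  wlen S f is junk.\<close>
definition wlen :: "'i set \<Rightarrow> ('v \<Rightarrow> 'v) \<Rightarrow> nat" where
  "wlen S f = (LEAST n. \<exists>ws. set ws \<subseteq> S \<and> length ws = n \<and> wprod ws = f)"

abbreviation len :: "('v \<Rightarrow> 'v) \<Rightarrow> nat" where
  "len \<equiv> wlen UNIV"

definition reduced :: "'i set \<Rightarrow> 'i list \<Rightarrow> bool" where
  "reduced S ws \<longleftrightarrow> set ws \<subseteq> S \<and> wlen S (wprod ws) = length ws"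

lemma wlen_le: "set ws \<subseteq> S \<Longrightarrow> wlen S (wprod ws) \<le> length ws"
  unfolding wlen_def by (rule Least_le) blast

lemma obtain_reduced:
  assumes "set ws \<subseteq> S"
  obtains p where "reduced S p" "wprod p = wprod ws"
proof -
  have "\<exists>p. set p \<subseteq> S \<and> length p = wlen S (wprod ws) \<and> wprod p = wprod ws"
    unfolding wlen_def by (rule LeastI_ex) (use assms in blast)
  then show thesis using that unfolding reduced_def by metis
qed

lemma wlen_comp_le:
  assumes "set xs \<subseteq> S" "set ys \<subseteq> T" "T \<subseteq> S"
  shows "wlen S (wprod xs \<circ> wprod ys) \<le> wlen S (wprod xs) + wlen T (wprod ys)"
proof -
  obtain xs' where xs': "reduced S xs'" "wprod xs' = wprod xs" using obtain_reduced[OF assms(1)] .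
  obtain ys' where ys': "reduced T ys'" "wprod ys' = wprod ys" using obtain_reduced[OF assms(2)] .
  have "wlen S (wprod xs \<circ> wprod ys) = wlen S (wprod (xs' @ ys'))"
    by (simp add: wprod_append xs' ys')
  also have "\<dots> \<le> length xs' + length ys'"
    using wlen_le[of "xs' @ ys'" S] xs' ys' assms(3) by (auto simp: reduced_def)
  finally show ?thesis using xs' ys' by (simp add: reduced_def)
qed

lemma wlen_comp_r_le: "i \<in> S \<Longrightarrow> set ws \<subseteq> S \<Longrightarrow> wlen S (r i \<circ> wprod ws) \<le> wlen S (wprod ws) + 1"
  using wlen_comp_le[of "[i]" S ws S] wlen_le[of "[i]" S] by (simp add: add.commute)

lemma reduced_Cons: "reduced S (i # ws) \<Longrightarrow> reduced S ws"
  using wlen_comp_r_le[of i S ws] wlen_le[of ws S] by (auto simp: reduced_def)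

lemma reduced_Cons_Cons_neq: "reduced S (i # j # ws) \<Longrightarrow> i \<noteq> j"
  using wlen_le[of ws S] by (auto simp: reduced_def comp_assoc[symmetric])

definition coroot_cone :: "'v set" where
  "coroot_cone = {(\<Sum>k\<in>UNIV. c k *\<^sub>R \<alpha>v k) | c. \<forall>k. 0 \<le> c k}"

lemma \<alpha>v_as_sum: "\<alpha>v i = (\<Sum>k\<in>UNIV. (if k = i then 1 else 0) *\<^sub>R \<alpha>v k)"
proof -
  have "(\<lambda>k. (if k = i then 1 else 0) *\<^sub>R \<alpha>v k) = (\<lambda>k. if k = i then \<alpha>v i else 0)"
    by auto
  then show ?thesis by (simp only:) simp
qed

lemma \<alpha>v_in_cone: "\<alpha>v i \<in> coroot_cone"
  unfolding coroot_cone_def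
  by (intro CollectI exI[of _ "\<lambda>k. if k = i then 1 else 0"]) (simp add: \<alpha>v_as_sum[symmetric])

lemma cone_nonneg_comb:
  assumes "x \<in> coroot_cone" "y \<in> coroot_cone" "0 \<le> c" "0 \<le> d"
  shows "c *\<^sub>R x + d *\<^sub>R y \<in> coroot_cone"
proof -
  obtain f g where fg: "\<forall>k. 0 \<le> f k" "x = (\<Sum>k\<in>UNIV. f k *\<^sub>R \<alpha>v k)"
    "\<forall>k. 0 \<le> g k" "y = (\<Sum>k\<in>UNIV. g k *\<^sub>R \<alpha>v k)"
    using assms(1,2) unfolding coroot_cone_def by blast
  then have "c *\<^sub>R x + d *\<^sub>R y = (\<Sum>k\<in>UNIV. (c * f k + d * g k) *\<^sub>R \<alpha>v k)"
    by (simp add: scaleR_sum_right sum.distrib scaleR_add_left)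
  moreover have "\<forall>k. 0 \<le> c * f k + d * g k" using fg assms(3,4) by simp
  ultimately show ?thesis unfolding coroot_cone_def
    by (intro CollectI exI[of _ "\<lambda>k. c * f k + d * g k"]) simp
qed

lemma neg_\<alpha>v_notin_cone: "- \<alpha>v i \<notin> coroot_cone"
proof
  assume "- \<alpha>v i \<in> coroot_cone"
  then obtain c where c: "\<forall>k. 0 \<le> c k" "(\<Sum>k\<in>UNIV. c k *\<^sub>R \<alpha>v k) = - \<alpha>v i"
    unfolding coroot_cone_def by auto
  define c' where "c' k = c k + (if k = i then 1 else 0)" for k
  have "(\<Sum>k\<in>UNIV. c' k *\<^sub>R \<alpha>v k)
      = (\<Sum>k\<in>UNIV. c k *\<^sub>R \<alpha>v k) + (\<Sum>k\<in>UNIV. (if k = i then 1 else 0) *\<^sub>R \<alpha>v k)"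
    unfolding c'_def by (simp only: scaleR_add_left sum.distrib)
  also have "\<dots> = 0"
    by (simp only: c(2) \<alpha>v_as_sum[symmetric] left_minus)
  finally have "c' i = 0" using indep_\<alpha>v unfolding lin_indep_vecs_def by blast
  with c(1) show False unfolding c'_def by (metis add_nonneg_pos zero_less_one less_irrefl)
qed

section \<open>Rank two\<close>

lemma r_rank2:
  "r s (v + c *\<^sub>R \<alpha>v s + d *\<^sub>R \<alpha>v t) = v + (bond t s * d - c - \<alpha> s v) *\<^sub>R \<alpha>v s + d *\<^sub>R \<alpha>v t"
  using linear_\<alpha>[of s]
  by (simp add: r_apply linear_add linear_scale \<alpha>_\<alpha>v gcm_diag algebra_simps)
    (metis mult_2_right scaleR_add_left)

lemma r_rank2':
  "r t (v + c *\<^sub>R \<alpha>v s + d *\<^sub>R \<alpha>v t) = v + c *\<^sub>R \<alpha>v s + (bond s t * c - d - \<alpha> t v) *\<^sub>R \<alpha>v t"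
  using r_rank2[where s = t and t = s and c = d and d = c] by (simp add: ac_simps)

lemma wprod_alt:
  "wprod (alt s t n) v = v
     + fst (alt_coeffs (bond s t) (bond t s) (\<alpha> s v) (\<alpha> t v) n) *\<^sub>R \<alpha>v s
     + snd (alt_coeffs (bond s t) (bond t s) (\<alpha> s v) (\<alpha> t v) n) *\<^sub>R \<alpha>v t"
proof (induction n)
  case (Suc n)
  obtain c d where "alt_coeffs (bond s t) (bond t s) (\<alpha> s v) (\<alpha> t v) n = (c, d)"
    by fastforce
  with Suc show ?case by (simp add: r_rank2 r_rank2')
qed simp

lemma wprod_alt_coroot:
  "wprod (alt s t n) (\<alpha>v s) =
     (1 + fst (alt_coeffs (bond s t) (bond t s) 2 (- bond s t) n)) *\<^sub>R \<alpha>v s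
     + snd (alt_coeffs (bond s t) (bond t s) 2 (- bond s t) n) *\<^sub>R \<alpha>v t"
  by (simp add: wprod_alt \<alpha>_\<alpha>v gcm_diag scaleR_add_left)

lemma wprod_alt_braid:
  assumes "\<And>P Q. alt_coeffs (bond s t) (bond t s) P Q m
    = prod.swap (alt_coeffs (bond t s) (bond s t) Q P m)"
  shows "wprod (alt s t m) = wprod (alt t s m)"
  by (rule ext) (simp add: wprod_alt assms ac_simps)

lemma reduced_alternating:
  assumes "s \<noteq> t" "reduced {s, t} p" "length p \<le> wlen {s, t} (wprod p \<circ> r s)"
  shows "p = alt s t (length p)"
  using assms(2,3)
proof (induction p)
  case (Cons x p)
  have red: "reduced {s, t} p" using Cons.prems(1) by (rule reduced_Cons)
  have x: "x \<in> {s, t}" using Cons.prems(1) by (simp add: reduced_def)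
  have "length p \<le> wlen {s, t} (wprod p \<circ> r s)"
  proof (rule ccontr)
    assume "\<not> ?thesis"
    then have "wlen {s, t} (wprod (p @ [s])) < length p" by (simp add: wprod_snoc)
    moreover have "wlen {s, t} (r x \<circ> wprod (p @ [s])) \<le> wlen {s, t} (wprod (p @ [s])) + 1"
      using wlen_comp_r_le[of x "{s, t}" "p @ [s]"] x red by (simp add: reduced_def)
    moreover have "wprod (x # p) \<circ> r s = r x \<circ> wprod (p @ [s])"
      by (simp add: wprod_snoc fun_eq_iff)
    then have "Suc (length p) \<le> wlen {s, t} (r x \<circ> wprod (p @ [s]))"
      using Cons.prems(2) by (simp only: length_Cons)
    ultimately show False by linarith
  qed
  with red Cons.IH have p: "p = alt s t (length p)" by blast
  show ?case
  proof (cases p)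
    case Nil
    have "x \<noteq> s"
    proof
      assume "x = s"
      then have "wprod (x # p) \<circ> r s = wprod []" using Nil by (simp add: fun_eq_iff)
      then have "Suc (length p) \<le> wlen {s, t} (wprod [])"
        using Cons.prems(2) by (simp only: length_Cons)
      then show False using wlen_le[of "[]" "{s, t}"] by simp
    qed
    with x Nil show ?thesis by simp
  next
    case (Cons y p')
    have "x \<noteq> y" using Cons \<open>reduced {s, t} (x # p)\<close> by (blast dest: reduced_Cons_Cons_neq)
    moreover have "y = (if odd (length p') then s else t)" using p Cons by simp
    ultimately show ?thesis using x p Cons \<open>s \<noteq> t\<close> by auto
  qed
qed simp

text \<open>By the braid relation of length m, an alternating word of length at least m violates the
  length hypothesis, leaving only the finitely many lengths below m.\<close>
lemma rank2_positivity_finite: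
  assumes "0 < m"
    and braid: "\<And>P Q. alt_coeffs (bond s t) (bond t s) P Q m
      = prod.swap (alt_coeffs (bond t s) (bond s t) Q P m)"
    and nonneg: "\<forall>n\<in>{..<m}. 0 \<le> 1 + fst (alt_coeffs (bond s t) (bond t s) 2 (- bond s t) n)
      \<and> 0 \<le> snd (alt_coeffs (bond s t) (bond t s) 2 (- bond s t) n)"
    and longer: "k \<le> wlen {s, t} (wprod (alt s t k) \<circ> r s)"
  shows "\<exists>c d. 0 \<le> c \<and> 0 \<le> d \<and> wprod (alt s t k) (\<alpha>v s) = c *\<^sub>R \<alpha>v s + d *\<^sub>R \<alpha>v t"
proof (cases "k < m")
  case True
  then show ?thesis using nonneg wprod_alt_coroot[of s t k] by blast
next
  case False
  define pre where "pre = take (k - m) (alt s t k)"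
  have "alt s t k = pre @ alt s t m"
    using alt_drop[of "k - m" s t m] False
    by (metis append_take_drop_id le_add_diff_inverse2 not_less pre_def)
  moreover have "wprod (alt s t m) = wprod (alt s t (m - 1) @ [s])"
    using wprod_alt_braid[OF braid] alt_Suc_snoc[of t s "m - 1"] \<open>0 < m\<close> by simp
  ultimately have "wprod (alt s t k) \<circ> r s = wprod (pre @ alt s t (m - 1))"
    by (simp add: wprod_append wprod_snoc fun_eq_iff)
  moreover have "set (pre @ alt s t (m - 1)) \<subseteq> {s, t}"
    using set_alt_subset[of s t k] set_alt_subset[of s t "m - 1"]
    by (auto simp: pre_def dest: in_set_takeD)
  ultimately have "wlen {s, t} (wprod (alt s t k) \<circ> r s) \<le> k - 1"
    using wlen_le[of "pre @ alt s t (m - 1)" "{s, t}"] False \<open>0 < m\<close> by (simp add: pre_def)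
  with longer False \<open>0 < m\<close> show ?thesis by simp
qed

lemma rank2_positivity:
  assumes "s \<noteq> t" "reduced {s, t} p" "length p \<le> wlen {s, t} (wprod p \<circ> r s)"
  shows "\<exists>c d. 0 \<le> c \<and> 0 \<le> d \<and> wprod p (\<alpha>v s) = c *\<^sub>R \<alpha>v s + d *\<^sub>R \<alpha>v t"
proof -
  obtain k where p: "p = alt s t k" using reduced_alternating[OF assms] by blast
  with assms(3) have longer: "k \<le> wlen {s, t} (wprod (alt s t k) \<circ> r s)" by simp
  define X Y where "X = - a s t" and "Y = - a t s"
  have XY: "0 \<le> X" "0 \<le> Y" "X = 0 \<longleftrightarrow> Y = 0"
    using gcm \<open>s \<noteq> t\<close> unfolding gcm_def X_def Y_def by auto
  have bonds: "bond s t = of_int X" "bond t s = of_int Y" by (simp_all add: X_def Y_def)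
  note finite_type = rank2_positivity_finite[OF _ _ _ longer, unfolded bonds]
  note evaluation = alt_coeffs_numeral lessThan_nat_numeral algebra_simps
  have "\<exists>c d. 0 \<le> c \<and> 0 \<le> d \<and> wprod (alt s t k) (\<alpha>v s) = c *\<^sub>R \<alpha>v s + d *\<^sub>R \<alpha>v t"
  proof (cases "X * Y < 4")
    case True
    with int_pairs_mult_lt_4[OF XY] consider "X = 0" "Y = 0" | "X = 1" "Y = 1" | "X = 1" "Y = 2"
      | "X = 2" "Y = 1" | "X = 1" "Y = 3" | "X = 3" "Y = 1" by blast
    then show ?thesis
    proof cases
      case 1
      show ?thesis by (rule finite_type[where m = 2]) (simp_all add: 1 evaluation)
    next
      case 2
      show ?thesis by (rule finite_type[where m = 3]) (simp_all add: 2 evaluation)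
    next
      case 3
      show ?thesis by (rule finite_type[where m = 4]) (simp_all add: 3 evaluation)
    next
      case 4
      show ?thesis by (rule finite_type[where m = 4]) (simp_all add: 4 evaluation)
    next
      case 5
      show ?thesis by (rule finite_type[where m = 6]) (simp_all add: 5 evaluation)
    next
      case 6
      show ?thesis by (rule finite_type[where m = 6]) (simp_all add: 6 evaluation)
    qed
  next
    case False
    then have "4 \<le> bond s t * bond t s"
      unfolding bonds by (metis not_less of_int_le_iff of_int_mult of_int_numeral)
    then show ?thesis
      using alt_coeffs_coroot_nonneg[of "bond s t" "bond t s" k] wprod_alt_coroot[of s t k] XY
      unfolding bonds by auto
  qed
  with p show ?thesis by simp
qed

section \<open>Positivity and faithfulness on coroots\<close>

lemma minimal_factorization:
  assumes p0: "set p0 \<subseteq> S" "f = wprod vs0 \<circ> wprod p0" "len (wprod vs0) + wlen S (wprod p0) \<le> len f"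
  obtains vs p where "reduced S p" "f = wprod vs \<circ> wprod p" "len (wprod vs) + length p \<le> len f"
    "len (wprod vs) \<le> len (wprod vs0)" "\<And>j. j \<in> S \<Longrightarrow> len (wprod vs) \<le> len (wprod vs \<circ> r j)"
proof -
  define F where "F vs \<longleftrightarrow> (\<exists>p. set p \<subseteq> S \<and> f = wprod vs \<circ> wprod p
    \<and> len (wprod vs) + wlen S (wprod p) \<le> len f)" for vs
  have "F vs0" using p0 unfolding F_def by blast
  then obtain vs where "F vs" and vs_min: "\<And>vs'. F vs' \<Longrightarrow> len (wprod vs) \<le> len (wprod vs')"
    using ex_has_least_nat[of F vs0 "\<lambda>vs. len (wprod vs)"] by blast
  then obtain p1 where p1: "set p1 \<subseteq> S" "f = wprod vs \<circ> wprod p1"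
    "len (wprod vs) + wlen S (wprod p1) \<le> len f" unfolding F_def by blast
  obtain p where p: "reduced S p" "wprod p = wprod p1" using obtain_reduced[OF p1(1)] .
  have "len (wprod vs) \<le> len (wprod vs \<circ> r j)" if "j \<in> S" for j
  proof (rule ccontr)
    assume "\<not> ?thesis"
    then have shorter: "len (wprod (vs @ [j])) < len (wprod vs)" by (simp add: wprod_snoc)
    have "F (vs @ [j])" unfolding F_def
    proof (intro exI conjI)
      show "set (j # p) \<subseteq> S" using that p(1) by (simp add: reduced_def)
      show "f = wprod (vs @ [j]) \<circ> wprod (j # p)"
        using p1(2) p(2) by (simp add: wprod_snoc fun_eq_iff)
      show "len (wprod (vs @ [j])) + wlen S (wprod (j # p)) \<le> len f"
        using wlen_comp_r_le[of j S p] that p p1(3) shorter by (simp add: reduced_def)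
    qed
    with vs_min shorter show False by fastforce
  qed
  then show thesis
    using that[OF p(1)] p p1 vs_min[OF \<open>F vs0\<close>] by (simp add: reduced_def)
qed

text \<open>
  Kac, Lemma 3.11: with r_s the last letter of a reduced expression, write w = v p with p in the
  subgroup generated by r_i and r_s and v as short as possible. The induction hypothesis applies
  to v, the dihedral case to p.
\<close>
theorem wprod_coroot_in_cone:
  "len (wprod ws) \<le> len (wprod ws \<circ> r i) \<Longrightarrow> wprod ws (\<alpha>v i) \<in> coroot_cone"
proof (induction "len (wprod ws)" arbitrary: ws i rule: less_induct)
  case less
  obtain q where q: "reduced UNIV q" "wprod q = wprod ws" using obtain_reduced[of ws UNIV] by auto
  show ?case
  proof (cases q rule: rev_cases)
    case Nil
    with q show ?thesis by (simp add: \<alpha>v_in_cone)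
  next
    case (snoc q' s)
    have len_ws: "len (wprod ws) = Suc (length q')" using q snoc by (simp add: reduced_def)
    have len_q': "len (wprod q') < len (wprod ws)" using wlen_le[of q' UNIV] len_ws by simp
    have ws: "wprod ws = wprod q' \<circ> r s" using q snoc by (simp add: wprod_snoc)
    have "s \<noteq> i"
    proof
      assume "s = i"
      then have "wprod ws \<circ> r i = wprod q'" using ws by (simp add: fun_eq_iff)
      with less.prems len_q' show False by simp
    qed
    obtain vs p where fac: "reduced {i, s} p" "wprod ws = wprod vs \<circ> wprod p"
      "len (wprod vs) + length p \<le> len (wprod ws)" "len (wprod vs) \<le> len (wprod q')"
      "\<And>j. j \<in> {i, s} \<Longrightarrow> len (wprod vs) \<le> len (wprod vs \<circ> r j)"
    proof (rule minimal_factorization[of "[s]" "{i, s}" "wprod ws" q'])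
      show "len (wprod q') + wlen {i, s} (wprod [s]) \<le> len (wprod ws)"
        using wlen_le[of "[s]" "{i, s}"] wlen_le[of q' UNIV] len_ws by simp
    qed (simp_all add: ws)
    have IH: "wprod vs (\<alpha>v j) \<in> coroot_cone" if "j \<in> {i, s}" for j
      using less.hyps[of vs j] fac(4,5) that len_q' by simp
    have "length p \<le> wlen {i, s} (wprod p \<circ> r i)"
    proof (rule ccontr)
      assume "\<not> ?thesis"
      then have "wlen {i, s} (wprod (p @ [i])) < length p" by (simp add: wprod_snoc)
      moreover have "wprod ws \<circ> r i = wprod vs \<circ> wprod (p @ [i])"
        using fac(2) by (simp add: wprod_snoc fun_eq_iff)
      then have "len (wprod ws \<circ> r i) \<le> len (wprod vs) + wlen {i, s} (wprod (p @ [i]))"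
        using wlen_comp_le[of vs UNIV "p @ [i]" "{i, s}"] fac(1) by (simp add: reduced_def)
      ultimately show False using less.prems fac(3) by linarith
    qed
    then obtain c d where cd: "0 \<le> c" "0 \<le> d" "wprod p (\<alpha>v i) = c *\<^sub>R \<alpha>v i + d *\<^sub>R \<alpha>v s"
      using rank2_positivity[OF \<open>s \<noteq> i\<close>[symmetric] fac(1)] by blast
    have "wprod ws (\<alpha>v i) = c *\<^sub>R wprod vs (\<alpha>v i) + d *\<^sub>R wprod vs (\<alpha>v s)"
      using fac(2) cd(3) linear_wprod[of vs] by (simp add: linear_add linear_scale)
    then show ?thesis using cone_nonneg_comb[OF IH IH cd(1,2)] by simp
  qed
qed

lemma wprod_eq_id_if_fixes_coroots:
  assumes fixed: "\<And>j. wprod ws (\<alpha>v j) = \<alpha>v j"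
  shows "wprod ws = id"
proof -
  obtain q where q: "reduced UNIV q" "wprod q = wprod ws" using obtain_reduced[of ws UNIV] by auto
  show ?thesis
  proof (cases q rule: rev_cases)
    case Nil
    with q show ?thesis by simp
  next
    case (snoc q' s)
    have "len (wprod q') \<le> len (wprod q' \<circ> r s)"
      using q snoc wlen_le[of q' UNIV] by (simp add: reduced_def wprod_snoc)
    then have "wprod q' (\<alpha>v s) \<in> coroot_cone" by (rule wprod_coroot_in_cone)
    moreover have "\<alpha>v s = wprod q' (r s (\<alpha>v s))"
      using fixed[of s] q snoc by (metis comp_apply wprod_snoc)
    then have "\<alpha>v s = - wprod q' (\<alpha>v s)"
      using linear_wprod[of q'] by (simp add: r_\<alpha>v_self linear_neg)
    ultimately show ?thesis using neg_\<alpha>v_notin_cone[of s] by (metis minus_minus)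
  qed
qed

lemma inj_on_coroot_images: "inj_on (\<lambda>w j. w (\<alpha>v j)) (Wgen \<alpha> \<alpha>v UNIV)"
proof (rule inj_onI)
  fix f g assume "f \<in> Wgen \<alpha> \<alpha>v UNIV" "g \<in> Wgen \<alpha> \<alpha>v UNIV"
    and same: "(\<lambda>j. f (\<alpha>v j)) = (\<lambda>j. g (\<alpha>v j))"
  then obtain p q where pq: "f = wprod p" "g = wprod q" unfolding Wgen_eq_wprod by blast
  have "wprod (rev q @ p) (\<alpha>v j) = \<alpha>v j" for j
    using fun_cong[OF same, of j] pq by (simp add: wprod_append)
  then have "wprod (rev q) \<circ> wprod p = id" by (metis wprod_append wprod_eq_id_if_fixes_coroots)
  then have "wprod p x = wprod q x" for x
    using wprod_rev_wprod[of "rev q" "wprod p x"] by (simp add: fun_eq_iff)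
  then show "f = g" using pq by auto
qed

lemma finite_if_coroot_orbits_finite:
  assumes "G \<subseteq> Wgen \<alpha> \<alpha>v UNIV" "\<And>j. finite ((\<lambda>g. g (\<alpha>v j)) ` G)"
  shows "finite G"
proof (rule finite_imageD)
  have "(\<lambda>w j. w (\<alpha>v j)) ` G \<subseteq> Pi\<^sub>E UNIV (\<lambda>j. (\<lambda>g. g (\<alpha>v j)) ` G)"
    by (auto simp: PiE_UNIV_domain)
  then show "finite ((\<lambda>w j. w (\<alpha>v j)) ` G)"
    by (rule finite_subset) (simp add: finite_PiE assms(2))
  show "inj_on (\<lambda>w j. w (\<alpha>v j)) G"
    using inj_on_coroot_images assms(1) by (rule inj_on_subset)
qed

lemma coroots_in_stable_subspace:
  assumes "indecomposable a" "subspace V" "\<And>j x. x \<in> V \<Longrightarrow> r j x \<in> V"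
    and "x \<in> V" "\<alpha> i x \<noteq> 0"
  shows "\<alpha>v j \<in> V"
proof -
  have "\<alpha>v i = (1 / \<alpha> i x) *\<^sub>R (x - r i x)" using assms(5) by (simp add: r_apply)
  then have "\<alpha>v i \<in> V" using assms(2-4) by (simp add: subspace_mul subspace_diff)
  have "(i, j) \<in> {(k, l). a k l \<noteq> 0}\<^sup>*"
    using assms(1) unfolding indecomposable_def by blast
  then show ?thesis
  proof (induction rule: rtrancl_induct)
    case (step k l)
    then have "\<alpha>v l = (1 / of_int (a k l)) *\<^sub>R (\<alpha>v k - r l (\<alpha>v k))"
      by (simp add: r_apply \<alpha>_\<alpha>v)
    with step assms(2,3) show ?case by (simp add: subspace_mul subspace_diff)
  qed fact
qed

lemma coroots_in_span_orbit:
  assumes "indecomposable a" "\<alpha> i u \<noteq> 0"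
  shows "\<alpha>v j \<in> span (range (\<lambda>ws. wprod ws u))"
proof (rule coroots_in_stable_subspace[OF assms(1) subspace_span _ _ assms(2)])
  have "r k (wprod ws u) = wprod (k # ws) u" for k ws by simp
  then have "r k ` range (\<lambda>ws. wprod ws u) \<subseteq> range (\<lambda>ws. wprod ws u)" for k by blast
  then show "r k x \<in> span (range (\<lambda>ws. wprod ws u))"
    if "x \<in> span (range (\<lambda>ws. wprod ws u))" for k x
    using span_closed_under_linear[OF linear_r _ that] by blast
  show "u \<in> span (range (\<lambda>ws. wprod ws u))"
    by (rule span_base) (simp add: range_eqI[of _ _ "[]"])
qed

end

theorem mainTheorem12:
  fixes a :: "'i::finite \<Rightarrow> 'i \<Rightarrow> int"
    and \<alpha> :: "'i \<Rightarrow> 'v::euclidean_space \<Rightarrow> real"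
    and \<alpha>v :: "'i \<Rightarrow> 'v"
    and K :: "'i set"
    and u :: 'v
  assumes "gcm a"
    and "\<And>i. linear (\<alpha> i)"
    and "lin_indep_forms \<alpha>"
    and "lin_indep_vecs \<alpha>v"
    and "\<And>i j. \<alpha> j (\<alpha>v i) = of_int (a i j)"
    and "indecomposable a"
    and "K \<subset> UNIV"
    and "infinite (Wgen \<alpha> \<alpha>v K)"
    and "\<And>i. i \<in> K \<Longrightarrow> \<alpha> i u = 0"
    and "\<And>i. i \<notin> K \<Longrightarrow> \<alpha> i u > 0"
  shows "\<exists>w \<in> Wgen \<alpha> \<alpha>v UNIV. infinite {w' (w u) | w'. w' \<in> Wgen \<alpha> \<alpha>v K}"
proof (rule ccontr)
  assume all_finite: "\<not> ?thesis"
  interpret gcm_realization a \<alpha> \<alpha>v using assms(1,2,4,5) by (simp add: gcm_realization_def)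
  define V where "V = span (range (\<lambda>ws. wprod ws u))"
  obtain i0 where "i0 \<notin> K" using assms(7) by blast
  then have coroots: "\<alpha>v j \<in> V" for j
    unfolding V_def using coroots_in_span_orbit[OF assms(6), of i0] assms(10) by force
  have finite_orbits: "finite ((\<lambda>g. g x) ` Wgen \<alpha> \<alpha>v K)" if "x \<in> V" for x
  proof (rule finite_orbits_span[OF _ _ that[unfolded V_def]])
    show "linear g" if "g \<in> Wgen \<alpha> \<alpha>v K" for g
      using that linear_wprod by (auto simp: Wgen_eq_wprod)
    show "finite ((\<lambda>g. g y) ` Wgen \<alpha> \<alpha>v K)" if "y \<in> range (\<lambda>ws. wprod ws u)" for y
      using that all_finite by (auto simp: Wgen_eq_wprod image_def setcompr_eq_image)
  qed
  have "finite (Wgen \<alpha> \<alpha>v K)"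
  proof (rule finite_if_coroot_orbits_finite)
    show "Wgen \<alpha> \<alpha>v K \<subseteq> Wgen \<alpha> \<alpha>v UNIV" by (auto simp: Wgen_eq_wprod)
  qed (use finite_orbits coroots in blast)
  with assms(8) show False by simp
qed

end
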